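(* In the lamination game described in the context, suppose the allocation $\alpha$ is locally free, i.e. almost surely $\alpha$ does not assign two consecutive slots $k-1,k$ to the same player (equivalently $b_{i,k}=0$ whenever $a_{i,k}>0$). Then player $i$'s unique dominant strategy is passthrough pricing, i.e. choosing a target depth $s_i$ whose marginal price equals the reference price: $\phi(s_i)=p_{\mathcal{O}}$.
   Context: A market is given by a price density function $\phi:U\to\mathbb{R}$ on an open set $U\subseteq(0,\infty)$, monotone decreasing (continuously differentiable); its argument is the liquidity depth. Fix a reference depth $x_{\mathcal{O}}>0$ and write $p_{\mathcal{O}}=\phi(x_{\mathcal{O}})$. The opportunity cost function is $C(x)=p_{\mathcal{O}}(x-x_{\mathcal{O}})+\int_x^{x_{\mathcal{O}}}\phi(u)\,du$. The game has $N$ players, $K$ liquidity orders of signed sizes $r_1,\dots,r_K$, an allocation $\alpha:\{0,\dots,K\}\to\{1,\dots,N\}$, and an initial depth $x_0>0$, where $x_0,(r_k),\alpha$ are random. Each player $i$ chooses a target depth $s_i\in A\subset(0,\infty)$. Conventions: $r_0=0$, $\alpha(-1)=0$, $s_0=x_0$. Utility: $U_i(\vec s)=\sum_{j:\alpha(j)=i}[C(s_{\alpha(j-1)}+r_j)-C(s_i)]$, and players maximize expected utility; $|C(s+r)|$ is assumed bounded by an integrable function. Primary weights $a_{i,k}=\mathbb{P}[\alpha(k)=i]$, secondary weights $b_{i,k}=\mathbb{P}[\alpha(k-1)=i\mid\alpha(k)=i]$. *)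

theory Defs
  imports "HOL-Probability.Probability"
begin

text \<open>Opportunity cost
  C(x) = p_O (x - x_O) + int_x^{x_O} phi(u) du,
with the oriented integral int_x^{x_O} = - int_{x_O}^x when x > x_O, and p_O = phi x_O.\<close>
definition opp_cost :: "(real \<Rightarrow> real) \<Rightarrow> real \<Rightarrow> real \<Rightarrow> real" where
  "opp_cost \<phi> xO x =
     \<phi> xO * (x - xO) +
     (if x \<le> xO then integral {x..xO} \<phi> else - integral {xO..x} \<phi>)"

text \<open>Realised utility of player i under the profile s (s j = target depth of player j, j = 1..N),
  for a fixed realisation: allocation al :: slot => player (slots 0..K), order sizes r,
  initial depth x0.  Conventions: r_0 = 0, al(-1) = 0, s_0 = x0.\<close>
definition game_utility ::
  "(real \<Rightarrow> real) \<Rightarrow> real \<Rightarrow> nat \<Rightarrow> (nat \<Rightarrow> nat) \<Rightarrow> (nat \<Rightarrow> real) \<Rightarrow> real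
     \<Rightarrow> nat \<Rightarrow> (nat \<Rightarrow> real) \<Rightarrow> real" where
  "game_utility \<phi> xO K al r x0 i s =
     (\<Sum>j\<in>{j. j \<le> K \<and> al j = i}.
        opp_cost \<phi> xO
          ((let p = (if j = 0 then 0 else al (j - 1)) in if p = 0 then x0 else s p)
           + (if j = 0 then 0 else r j))
        - opp_cost \<phi> xO (s i))"

definition expected_utility ::
  "'w measure \<Rightarrow> (real \<Rightarrow> real) \<Rightarrow> real \<Rightarrow> nat \<Rightarrow> ('w \<Rightarrow> nat \<Rightarrow> nat) \<Rightarrow> ('w \<Rightarrow> nat \<Rightarrow> real)
     \<Rightarrow> ('w \<Rightarrow> real) \<Rightarrow> nat \<Rightarrow> (nat \<Rightarrow> real) \<Rightarrow> real" where
  "expected_utility M \<phi> xO K \<alpha> r x0 i s =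
     (\<integral>\<omega>. game_utility \<phi> xO K (\<alpha> \<omega>) (r \<omega>) (x0 \<omega>) i s \<partial>M)"

definition dominant_strategy ::
  "'w measure \<Rightarrow> (real \<Rightarrow> real) \<Rightarrow> real \<Rightarrow> nat \<Rightarrow> ('w \<Rightarrow> nat \<Rightarrow> nat) \<Rightarrow> ('w \<Rightarrow> nat \<Rightarrow> real)
     \<Rightarrow> ('w \<Rightarrow> real) \<Rightarrow> nat \<Rightarrow> real set \<Rightarrow> nat \<Rightarrow> real \<Rightarrow> bool" where
  "dominant_strategy M \<phi> xO K \<alpha> r x0 N A i si \<longleftrightarrow>
     si \<in> A \<and>
     (\<forall>s. (\<forall>j\<in>{1..N}. s j \<in> A) \<longrightarrow> (\<forall>t\<in>A.
        expected_utility M \<phi> xO K \<alpha> r x0 i (s(i := t))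
          \<le> expected_utility M \<phi> xO K \<alpha> r x0 i (s(i := si))))"

end

theory Submission imports Defs begin

(* Under a locally free allocation no order of player i directly follows another order of i, so
   the depth at which an order of i arrives never depends on s_i: the strategy s_i enters i's
   utility only through the term -C(s_i), once per order of i.  Changing s_i from u to t therefore
   changes the expected utility by E[number of orders of i] * (C(u) - C(t)), and as i receives an
   order with positive probability, s_i is dominant iff it minimises C over A.  Because phi is
   decreasing, C(x) is the integral of |phi - p_O| between x and x_O, so C >= 0 with equality
   exactly when phi(x) = p_O; such a point exists in A, so the minimisers are the passthrough
   prices. *)

lemma opp_cost_below:
  assumes "x \<le> xO" "\<phi> integrable_on {x..xO}"
  shows "opp_cost \<phi> xO x = integral {x..xO} (\<lambda>u. \<phi> u - \<phi> xO)"
  using assms by (simp add: opp_cost_def integral_diff integrable_const_ivl algebra_simps)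

lemma opp_cost_above:
  assumes "xO \<le> x" "\<phi> integrable_on {xO..x}"
  shows "opp_cost \<phi> xO x = integral {xO..x} (\<lambda>u. \<phi> xO - \<phi> u)"
  using assms
  by (cases "x = xO") (simp_all add: opp_cost_def integral_diff integrable_const_ivl algebra_simps)

lemma opp_cost_eq_integral_abs:
  fixes x xO :: real
  assumes "continuous_on {min x xO..max x xO} \<phi>" "antimono_on {min x xO..max x xO} \<phi>"
  shows "opp_cost \<phi> xO x = integral {min x xO..max x xO} (\<lambda>u. \<bar>\<phi> u - \<phi> xO\<bar>)"
proof (cases "x \<le> xO")
  case True
  with assms have "\<phi> xO \<le> \<phi> u" if "u \<in> {x..xO}" for u
    using that by (auto simp: monotone_on_def)
  then have "integral {x..xO} (\<lambda>u. \<phi> u - \<phi> xO) = integral {x..xO} (\<lambda>u. \<bar>\<phi> u - \<phi> xO\<bar>)"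
    by (intro integral_cong) simp
  with True assms(1) show ?thesis
    by (simp add: opp_cost_below integrable_continuous_interval)
next
  case False
  with assms have "\<phi> u \<le> \<phi> xO" if "u \<in> {xO..x}" for u
    using that by (auto simp: monotone_on_def)
  then have "integral {xO..x} (\<lambda>u. \<phi> xO - \<phi> u) = integral {xO..x} (\<lambda>u. \<bar>\<phi> u - \<phi> xO\<bar>)"
    by (intro integral_cong) simp
  with False assms(1) show ?thesis
    by (simp add: opp_cost_above integrable_continuous_interval)
qed

lemma opp_cost_nonneg:
  fixes x xO :: real
  assumes "continuous_on {min x xO..max x xO} \<phi>" "antimono_on {min x xO..max x xO} \<phi>"
  shows "0 \<le> opp_cost \<phi> xO x"
proof -
  have "continuous_on {min x xO..max x xO} (\<lambda>u. \<bar>\<phi> u - \<phi> xO\<bar>)"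
    using assms(1) by (intro continuous_intros)
  with assms show ?thesis
    by (simp add: opp_cost_eq_integral_abs integral_nonneg integrable_continuous_interval)
qed

lemma opp_cost_eq_0_iff:
  fixes x xO :: real
  assumes "continuous_on {min x xO..max x xO} \<phi>" "antimono_on {min x xO..max x xO} \<phi>"
  shows "opp_cost \<phi> xO x = 0 \<longleftrightarrow> \<phi> x = \<phi> xO"
proof (cases "x = xO")
  case False
  have "continuous_on {min x xO..max x xO} (\<lambda>u. \<bar>\<phi> u - \<phi> xO\<bar>)"
    using assms(1) by (intro continuous_intros)
  moreover have "min x xO < max x xO"
    using False by (simp add: min_def max_def)
  ultimately
  have "opp_cost \<phi> xO x = 0 \<longleftrightarrow> (\<forall>u\<in>{min x xO..max x xO}. \<bar>\<phi> u - \<phi> xO\<bar> = 0)"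
    unfolding opp_cost_eq_integral_abs[OF assms] by (rule integral_eq_0_iff) simp
  also have "\<dots> \<longleftrightarrow> (\<forall>u\<in>{min x xO..max x xO}. \<phi> u = \<phi> xO)"
    by simp
  also have "\<dots> \<longleftrightarrow> \<phi> x = \<phi> xO"
  proof (intro iffI ballI)
    fix u assume "\<phi> x = \<phi> xO" and u: "u \<in> {min x xO..max x xO}"
    have "\<phi> (min x xO) = \<phi> xO" "\<phi> (max x xO) = \<phi> xO"
      using \<open>\<phi> x = \<phi> xO\<close> by (simp_all add: min_def max_def)
    moreover have "\<phi> (max x xO) \<le> \<phi> u"
      by (rule monotone_onD[OF assms(2) u]) (use u in auto)
    moreover have "\<phi> u \<le> \<phi> (min x xO)"
      by (rule monotone_onD[OF assms(2) _ u]) (use u in auto)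
    ultimately show "\<phi> u = \<phi> xO" by simp
  next
    assume "\<forall>u\<in>{min x xO..max x xO}. \<phi> u = \<phi> xO"
    moreover have "x \<in> {min x xO..max x xO}" by simp
    ultimately show "\<phi> x = \<phi> xO" by blast
  qed
  finally show ?thesis .
qed (simp add: opp_cost_def)

lemma opp_cost_minimal_iff:
  fixes xO :: real
  assumes "continuous_on U \<phi>" "antimono_on U \<phi>"
    and segments: "\<forall>t\<in>A. {min t xO..max t xO} \<subseteq> U"
    and "\<exists>s\<in>A. \<phi> s = \<phi> xO" "si \<in> A"
  shows "(\<forall>t\<in>A. opp_cost \<phi> xO si \<le> opp_cost \<phi> xO t) \<longleftrightarrow> \<phi> si = \<phi> xO"
proof -
  have segment: "continuous_on {min t xO..max t xO} \<phi>" "antimono_on {min t xO..max t xO} \<phi>"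
    if "t \<in> A" for t
  proof -
    have "{min t xO..max t xO} \<subseteq> U"
      using segments that by blast
    then show "continuous_on {min t xO..max t xO} \<phi>" "antimono_on {min t xO..max t xO} \<phi>"
      using assms(1,2) by (simp_all add: continuous_on_subset monotone_on_subset)
  qed
  have nonneg: "0 \<le> opp_cost \<phi> xO t" if "t \<in> A" for t
    using segment[OF that] by (rule opp_cost_nonneg)
  obtain s0 where "s0 \<in> A" "\<phi> s0 = \<phi> xO"
    using assms(4) by blast
  then have "opp_cost \<phi> xO s0 = 0"
    using opp_cost_eq_0_iff[OF segment] by blast
  have "(\<forall>t\<in>A. opp_cost \<phi> xO si \<le> opp_cost \<phi> xO t) \<longleftrightarrow> opp_cost \<phi> xO si = 0"
  proof
    assume "\<forall>t\<in>A. opp_cost \<phi> xO si \<le> opp_cost \<phi> xO t"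
    with \<open>s0 \<in> A\<close> \<open>opp_cost \<phi> xO s0 = 0\<close> nonneg[OF \<open>si \<in> A\<close>]
    show "opp_cost \<phi> xO si = 0" by force
  qed (simp add: nonneg)
  also have "\<dots> \<longleftrightarrow> \<phi> si = \<phi> xO"
    using segment[OF \<open>si \<in> A\<close>] by (rule opp_cost_eq_0_iff)
  finally show ?thesis .
qed

lemma game_utility_fun_upd:
  assumes "\<forall>k\<in>{1..K}. al (k - 1) \<noteq> al k"
  shows "game_utility \<phi> xO K al r x0 i (s(i := v)) =
    game_utility \<phi> xO K al r x0 i s
    + real (card {j. j \<le> K \<and> al j = i}) * (opp_cost \<phi> xO (s i) - opp_cost \<phi> xO v)"
proof -
  let ?cost = "\<lambda>s j. opp_cost \<phi> xO
    ((let p = (if j = 0 then 0 else al (j - 1)) in if p = 0 then x0 else s p)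
     + (if j = 0 then 0 else r j)) - opp_cost \<phi> xO (s i)"
  let ?S = "{j. j \<le> K \<and> al j = i}"
  have "game_utility \<phi> xO K al r x0 i (s(i := v)) =
    (\<Sum>j\<in>?S. ?cost s j + (opp_cost \<phi> xO (s i) - opp_cost \<phi> xO v))"
    unfolding game_utility_def
    by (rule sum.cong) (use assms in \<open>auto simp: Let_def\<close>)
  also have "\<dots> = game_utility \<phi> xO K al r x0 i s
      + real (card ?S) * (opp_cost \<phi> xO (s i) - opp_cost \<phi> xO v)"
    unfolding game_utility_def sum.distrib by simp
  finally show ?thesis .
qed

lemma (in finite_measure) has_bochner_integral_card_slots:
  fixes \<alpha> :: "'a \<Rightarrow> nat \<Rightarrow> 'b"
  assumes "\<And>k. k \<le> K \<Longrightarrow> (\<lambda>\<omega>. \<alpha> \<omega> k) \<in> measurable M (count_space UNIV)"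
  shows "has_bochner_integral M (\<lambda>\<omega>. real (card {j. j \<le> K \<and> \<alpha> \<omega> j = i}))
    (\<Sum>k\<le>K. measure M {\<omega>\<in>space M. \<alpha> \<omega> k = i})"
proof -
  have "real (card {j. j \<le> K \<and> \<alpha> \<omega> j = i}) = (\<Sum>k\<le>K. indicator {\<omega>\<in>space M. \<alpha> \<omega> k = i} \<omega>)"
    if "\<omega> \<in> space M" for \<omega>
  proof -
    have "(\<Sum>k\<le>K. indicator {\<omega>\<in>space M. \<alpha> \<omega> k = i} \<omega>) = (\<Sum>k\<le>K. of_bool (\<alpha> \<omega> k = i) :: real)"
      using that by (simp add: indicator_def)
    also have "\<dots> = real (card ({..K} \<inter> {k. \<alpha> \<omega> k = i}))"
      by (rule sum_of_bool_eq) auto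
    also have "{..K} \<inter> {k. \<alpha> \<omega> k = i} = {j. j \<le> K \<and> \<alpha> \<omega> j = i}" by auto
    finally show ?thesis ..
  qed
  moreover have "{\<omega>\<in>space M. \<alpha> \<omega> k = i} \<in> sets M" if "k \<le> K" for k
  proof -
    have "{\<omega>\<in>space M. \<alpha> \<omega> k = i} = (\<lambda>\<omega>. \<alpha> \<omega> k) -` {i} \<inter> space M" by auto
    then show ?thesis using measurable_sets[OF assms[OF that], of "{i}"] by simp
  qed
  ultimately show ?thesis
    by (subst has_bochner_integral_cong[OF refl _ refl])
      (auto intro!: has_bochner_integral_sum has_bochner_integral_real_indicator
        simp: less_top[symmetric])
qed

lemma expected_utility_fun_upd_diff:
  assumes "integrable M (\<lambda>\<omega>. game_utility \<phi> xO K (\<alpha> \<omega>) (r \<omega>) (x0 \<omega>) i (s(i := t)))"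
    and "integrable M (\<lambda>\<omega>. game_utility \<phi> xO K (\<alpha> \<omega>) (r \<omega>) (x0 \<omega>) i (s(i := u)))"
    and "AE \<omega> in M. \<forall>k\<in>{1..K}. \<alpha> \<omega> (k - 1) \<noteq> \<alpha> \<omega> k"
    and "has_bochner_integral M (\<lambda>\<omega>. real (card {j. j \<le> K \<and> \<alpha> \<omega> j = i})) n"
  shows "expected_utility M \<phi> xO K \<alpha> r x0 i (s(i := t)) - expected_utility M \<phi> xO K \<alpha> r x0 i (s(i := u))
    = n * (opp_cost \<phi> xO u - opp_cost \<phi> xO t)"
proof -
  let ?G = "\<lambda>v \<omega>. game_utility \<phi> xO K (\<alpha> \<omega>) (r \<omega>) (x0 \<omega>) i (s(i := v))"
  let ?n = "\<lambda>\<omega>. real (card {j. j \<le> K \<and> \<alpha> \<omega> j = i})"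
  have "expected_utility M \<phi> xO K \<alpha> r x0 i (s(i := t)) - expected_utility M \<phi> xO K \<alpha> r x0 i (s(i := u))
      = (\<integral>\<omega>. ?G t \<omega> - ?G u \<omega> \<partial>M)"
    unfolding expected_utility_def using assms(1,2) by simp
  also have "\<dots> = (\<integral>\<omega>. ?n \<omega> * (opp_cost \<phi> xO u - opp_cost \<phi> xO t) \<partial>M)"
  proof (rule integral_cong_AE)
    show "AE \<omega> in M. ?G t \<omega> - ?G u \<omega> = ?n \<omega> * (opp_cost \<phi> xO u - opp_cost \<phi> xO t)"
      using assms(3) by eventually_elim (simp add: game_utility_fun_upd algebra_simps)
  qed (use assms borel_measurable_has_bochner_integral in auto)
  also have "\<dots> = n * (opp_cost \<phi> xO u - opp_cost \<phi> xO t)"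
    using has_bochner_integral_integral_eq[OF assms(4)] by simp
  finally show ?thesis .
qed

lemma dominant_strategy_iff_opp_cost_minimal:
  assumes integrable: "\<And>s. \<forall>j\<in>{1..N}. s j \<in> A \<Longrightarrow>
      integrable M (\<lambda>\<omega>. game_utility \<phi> xO K (\<alpha> \<omega>) (r \<omega>) (x0 \<omega>) i s)"
    and locally_free: "AE \<omega> in M. \<forall>k\<in>{1..K}. \<alpha> \<omega> (k - 1) \<noteq> \<alpha> \<omega> k"
    and slots: "has_bochner_integral M (\<lambda>\<omega>. real (card {j. j \<le> K \<and> \<alpha> \<omega> j = i})) n"
    and "0 < n" and "si \<in> A"
  shows "dominant_strategy M \<phi> xO K \<alpha> r x0 N A i si \<longleftrightarrow> (\<forall>t\<in>A. opp_cost \<phi> xO si \<le> opp_cost \<phi> xO t)"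
proof -
  have better_iff: "expected_utility M \<phi> xO K \<alpha> r x0 i (s(i := t))
      \<le> expected_utility M \<phi> xO K \<alpha> r x0 i (s(i := si)) \<longleftrightarrow> opp_cost \<phi> xO si \<le> opp_cost \<phi> xO t"
    if "\<forall>j\<in>{1..N}. s j \<in> A" "t \<in> A" for s t
  proof -
    have "expected_utility M \<phi> xO K \<alpha> r x0 i (s(i := t)) - expected_utility M \<phi> xO K \<alpha> r x0 i (s(i := si))
        = n * (opp_cost \<phi> xO si - opp_cost \<phi> xO t)"
      using that \<open>si \<in> A\<close>
      by (intro expected_utility_fun_upd_diff integrable locally_free slots) auto
    moreover have "n * (opp_cost \<phi> xO si - opp_cost \<phi> xO t) \<le> 0 \<longleftrightarrow> opp_cost \<phi> xO si \<le> opp_cost \<phi> xO t"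
      using \<open>0 < n\<close> by (simp add: mult_le_0_iff)
    ultimately show ?thesis by linarith
  qed
  show ?thesis
  proof
    assume dominant: "dominant_strategy M \<phi> xO K \<alpha> r x0 N A i si"
    have constant_profile: "\<forall>j\<in>{1..N}. (\<lambda>_. si) j \<in> A"
      using \<open>si \<in> A\<close> by simp
    show "\<forall>t\<in>A. opp_cost \<phi> xO si \<le> opp_cost \<phi> xO t"
    proof
      fix t assume "t \<in> A"
      with dominant constant_profile
      have "expected_utility M \<phi> xO K \<alpha> r x0 i ((\<lambda>_. si)(i := t))
          \<le> expected_utility M \<phi> xO K \<alpha> r x0 i ((\<lambda>_. si)(i := si))"
        unfolding dominant_strategy_def by (elim conjE allE[of _ "\<lambda>_. si"]) blast
      with better_iff[OF constant_profile \<open>t \<in> A\<close>] show "opp_cost \<phi> xO si \<le> opp_cost \<phi> xO t"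
        by blast
    qed
  next
    assume "\<forall>t\<in>A. opp_cost \<phi> xO si \<le> opp_cost \<phi> xO t"
    with better_iff \<open>si \<in> A\<close> show "dominant_strategy M \<phi> xO K \<alpha> r x0 N A i si"
      unfolding dominant_strategy_def by blast
  qed
qed

theorem mainTheorem2:
  fixes M :: "'w measure" and \<phi> :: "real \<Rightarrow> real" and U A :: "real set"
    and xO :: real and N K i :: nat
    and \<alpha> :: "'w \<Rightarrow> nat \<Rightarrow> nat" and r :: "'w \<Rightarrow> nat \<Rightarrow> real" and x0 :: "'w \<Rightarrow> real"
    and si :: real
  assumes "prob_space M"
    and "open U" and "U \<subseteq> {0<..}"
    and "\<phi> C1_differentiable_on U"
    and "\<forall>x\<in>U. \<forall>y\<in>U. x \<le> y \<longrightarrow> \<phi> y \<le> \<phi> x"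
    and "xO \<in> U"
    and "A \<subseteq> U" and "\<forall>s\<in>A. {min s xO..max s xO} \<subseteq> U"
    and "\<exists>s\<in>A. \<phi> s = \<phi> xO"
    and "\<forall>\<omega>\<in>space M. x0 \<omega> > 0"
    and "\<forall>\<omega>\<in>space M. \<forall>k\<le>K. \<alpha> \<omega> k \<in> {1..N}"
    and "\<forall>k\<le>K. (\<lambda>\<omega>. \<alpha> \<omega> k) \<in> measurable M (count_space UNIV)"
    and "\<forall>s. (\<forall>j\<in>{1..N}. s j \<in> A) \<longrightarrow>
           integrable M (\<lambda>\<omega>. game_utility \<phi> xO K (\<alpha> \<omega>) (r \<omega>) (x0 \<omega>) i s)"
    and "AE \<omega> in M. \<forall>k\<in>{1..K}. \<alpha> \<omega> (k - 1) \<noteq> \<alpha> \<omega> k"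
    and "i \<in> {1..N}"
    and "\<exists>k\<le>K. measure M {\<omega>\<in>space M. \<alpha> \<omega> k = i} > 0"
    and "si \<in> A"
  shows "dominant_strategy M \<phi> xO K \<alpha> r x0 N A i si \<longleftrightarrow> \<phi> si = \<phi> xO"
proof -
  interpret prob_space M by fact
  let ?n = "\<Sum>k\<le>K. measure M {\<omega>\<in>space M. \<alpha> \<omega> k = i}"
  have slots: "has_bochner_integral M (\<lambda>\<omega>. real (card {j. j \<le> K \<and> \<alpha> \<omega> j = i})) ?n"
    using assms(12) by (intro has_bochner_integral_card_slots) blast
  have "0 < ?n"
    using assms(16) by (auto intro: sum_pos2)
  have "continuous_on U \<phi>"
    using assms(4) by (rule C1_differentiable_imp_continuous_on)
  moreover have "antimono_on U \<phi>"
    using assms(5) by (auto simp: monotone_on_def)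
  moreover have "dominant_strategy M \<phi> xO K \<alpha> r x0 N A i si
      \<longleftrightarrow> (\<forall>t\<in>A. opp_cost \<phi> xO si \<le> opp_cost \<phi> xO t)"
    using assms(13,14,17) slots \<open>0 < ?n\<close> by (intro dominant_strategy_iff_opp_cost_minimal) auto
  ultimately show ?thesis
    using assms(8,9,17) opp_cost_minimal_iff by blast
qed

end
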